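(* Let $\mathcal D=U(-1,1)$ and, for $m\in\mathbb N$ ($m\ge 1$), let $\mathcal D_m$ denote the distribution of the sum of $m$ i.i.d. samples from $\mathcal D$. Let $Z_1\sim\mathcal D_{m}$ for some $m\ge 1$, let $X\sim\mathcal D$, and let $Y$ be a continuous random variable whose probability density function $f_Y$ satisfies $f_Y(y)\ge f_Y(-y)$ for every $y\ge 0$, where $Z_1$, $X$, $Y$ are independent. Then $\mathbb P(Z_1\ge Y)\le \mathbb P(Z_1+X\ge Y)$. *)

theory Defs
  imports "HOL-Probability.Probability"
begin

definition unifD :: "real measure" where
  "unifD = uniform_measure lborel {-1..1}"

definition unifD_sum :: "nat \<Rightarrow> real measure" where
  "unifD_sum m = distr (PiM {..<m} (\<lambda>_. unifD)) lborel (\<lambda>\<omega>. \<Sum>i<m. \<omega> i)"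

end

theory Submission
  imports Defs
begin

text \<open>Call a distribution on the reals symmetric unimodal if its two tails are mirror images and a
  window of fixed width carries less mass the farther its centre lies from 0. Convolving with
  U(-1,1) averages window masses over translates, so it preserves this property, and it removes
  atoms; hence every D_m with m >= 1 is symmetric unimodal and atomless. For such a distribution
  the tail T(y) = P(Z >= y) satisfies 2 T(y) <= T(y - x) + T(y + x) for y >= 0, because the window
  [y, y + x] is farther from 0 than [y - x, y]; averaging over x ~ U(-1,1) gives T(y) <= T'(y) for
  the tail T' of Z + X. Finally P(Z >= Y) is the integral of f_Y T. Pairing y with -y and using
  T(-y) = 1 - T(y), the integrand becomes f_Y(-y) + (f_Y(y) - f_Y(-y)) T(y), which can only grow
  when T is replaced by T', since f_Y(y) >= f_Y(-y) for y >= 0.\<close>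

section \<open>The uniform distribution on [-1, 1]\<close>

lemma prob_space_unifD: "prob_space unifD"
  unfolding unifD_def by (rule prob_space_uniform_measure) auto

lemma product_prob_space_unifD: "product_prob_space (\<lambda>_. unifD)"
  by (simp add: product_prob_space_def product_prob_space_axioms_def product_sigma_finite_def
      prob_space_unifD prob_space_imp_sigma_finite)

lemma sets_unifD [measurable_cong, simp]: "sets unifD = sets borel"
  unfolding unifD_def by simp

lemma space_unifD [simp]: "space unifD = UNIV"
  unfolding unifD_def by simp

lemma nn_integral_unifD:
  assumes [measurable]: "f \<in> borel_measurable borel"
  shows "(\<integral>\<^sup>+x. f x \<partial>unifD) = (\<integral>\<^sup>+x. f x * indicator {-1..1} x \<partial>lborel) / 2"
  unfolding unifD_def by (subst nn_integral_uniform_measure) auto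

lemma nn_integral_lborel_reflect:
  fixes f :: "real \<Rightarrow> ennreal"
  assumes "f \<in> borel_measurable borel"
  shows "(\<integral>\<^sup>+x. f (- x) \<partial>lborel) = (\<integral>\<^sup>+x. f x \<partial>lborel)"
  using nn_integral_real_affine[OF assms, of "-1" 0] by simp

lemma nn_integral_lborel_translate:
  fixes f :: "real \<Rightarrow> ennreal"
  assumes "f \<in> borel_measurable borel"
  shows "(\<integral>\<^sup>+x. f (x + t) \<partial>lborel) = (\<integral>\<^sup>+x. f x \<partial>lborel)"
  using nn_integral_real_affine[OF assms, of 1 t] by (simp add: add.commute)

lemma nn_integral_unifD_reflect:
  assumes [measurable]: "f \<in> borel_measurable borel"
  shows "(\<integral>\<^sup>+x. f (- x) \<partial>unifD) = (\<integral>\<^sup>+x. f x \<partial>unifD)"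
proof -
  have "(\<integral>\<^sup>+x. f (- x) * indicator {-1..1} x \<partial>lborel)
      = (\<integral>\<^sup>+x. f (- x) * indicator {-1..1} (- x) \<partial>lborel)"
    by (intro nn_integral_cong) (auto simp: indicator_def)
  also have "\<dots> = (\<integral>\<^sup>+x. f x * indicator {-1..1} x \<partial>lborel)"
    by (rule nn_integral_lborel_reflect) measurable
  finally show ?thesis
    by (simp add: nn_integral_unifD)
qed

lemma emeasure_unifD_singleton [simp]: "emeasure unifD {a} = 0"
proof -
  have "emeasure unifD {a} = emeasure lborel ({-1..1} \<inter> {a}) / emeasure lborel {-1..1::real}"
    unfolding unifD_def by (rule emeasure_uniform_measure) auto
  also have "emeasure lborel ({-1..1} \<inter> {a}) = 0"
    by (cases "a \<in> {-1..1}") auto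
  finally show ?thesis by simp
qed

lemma nn_integral_Icc_translate_antimono:
  fixes \<phi> :: "real \<Rightarrow> ennreal"
  assumes [measurable]: "\<phi> \<in> borel_measurable borel"
    and \<phi>: "\<And>a b. \<bar>a\<bar> \<le> \<bar>b\<bar> \<Longrightarrow> \<phi> b \<le> \<phi> a"
    and c: "0 \<le> c" "c \<le> c'"
  shows "(\<integral>\<^sup>+x. \<phi> (c' - x) * indicator {-1..1} x \<partial>lborel)
       \<le> (\<integral>\<^sup>+x. \<phi> (c - x) * indicator {-1..1} x \<partial>lborel)"
proof (cases "c' - c \<ge> 2")
  case True
  then have "\<phi> (c' - x) * indicator {-1..1} x \<le> \<phi> (c - x) * indicator {-1..1} x" for x
    using c \<phi>[of "c - x" "c' - x"] by (auto simp: indicator_def)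
  then show ?thesis
    by (rule nn_integral_mono)
next
  case False
  define d where "d = c' - c"
  have d: "0 \<le> d" "d < 2"
    using False c by (auto simp: d_def)
  text \<open>Substituting \<open>u = x - d\<close> turns the left side into an integral of \<open>\<phi> (c - u)\<close> over
    \<open>[-1 - d, 1 - d]\<close>; the piece \<open>[-1 - d, -1)\<close> shifted right by 2 lands on \<open>[1 - d, 1)\<close>,
    where \<open>\<bar>c - u\<bar>\<close> is smaller.\<close>
  have "(\<integral>\<^sup>+x. \<phi> (c' - x) * indicator {-1..1} x \<partial>lborel)
      = (\<integral>\<^sup>+u. \<phi> (c' - (u + d)) * indicator {-1..1} (u + d) \<partial>lborel)"
    by (rule nn_integral_lborel_translate[symmetric]) measurable
  also have "\<dots> = (\<integral>\<^sup>+u. \<phi> (c - u) * indicator {-1-d..<-1} u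
                        + \<phi> (c - u) * indicator {-1..1-d} u \<partial>lborel)"
    using d by (intro nn_integral_cong) (auto simp: indicator_def d_def)
  also have "\<dots> = (\<integral>\<^sup>+u. \<phi> (c - u) * indicator {-1-d..<-1} u \<partial>lborel)
                 + (\<integral>\<^sup>+u. \<phi> (c - u) * indicator {-1..1-d} u \<partial>lborel)"
    by (rule nn_integral_add) measurable
  also have "(\<integral>\<^sup>+u. \<phi> (c - u) * indicator {-1-d..<-1} u \<partial>lborel)
           = (\<integral>\<^sup>+v. \<phi> (c - (v - 2)) * indicator {-1-d..<-1} (v - 2) \<partial>lborel)"
    using nn_integral_lborel_translate[of "\<lambda>u. \<phi> (c - u) * indicator {-1-d..<-1} u" "-2"] by simp
  also have "\<dots> \<le> (\<integral>\<^sup>+v. \<phi> (c - v) * indicator {1-d..<1} v \<partial>lborel)"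
  proof (rule nn_integral_mono)
    fix v :: real
    show "\<phi> (c - (v - 2)) * indicator {-1-d..<-1} (v - 2) \<le> \<phi> (c - v) * indicator {1-d..<1} v"
      using c \<phi>[of "c - v" "c - (v - 2)"] by (auto simp: indicator_def)
  qed
  also have "(\<integral>\<^sup>+v. \<phi> (c - v) * indicator {1-d..<1} v \<partial>lborel)
             + (\<integral>\<^sup>+u. \<phi> (c - u) * indicator {-1..1-d} u \<partial>lborel)
           = (\<integral>\<^sup>+v. \<phi> (c - v) * indicator {1-d..<1} v
                    + \<phi> (c - v) * indicator {-1..1-d} v \<partial>lborel)"
    by (rule nn_integral_add[symmetric]) measurable
  also have "\<dots> \<le> (\<integral>\<^sup>+x. \<phi> (c - x) * indicator {-1..1} x \<partial>lborel)"
    using d by (intro nn_integral_mono_AE eventually_mono[OF AE_lborel_singleton[of "1 - d"]])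
      (auto simp: indicator_def)
  finally show ?thesis
    by (simp add: add_right_mono)
qed

lemma nn_integral_unifD_translate_antimono:
  fixes \<phi> :: "real \<Rightarrow> ennreal"
  assumes [measurable]: "\<phi> \<in> borel_measurable borel"
    and \<phi>: "\<And>a b. \<bar>a\<bar> \<le> \<bar>b\<bar> \<Longrightarrow> \<phi> b \<le> \<phi> a"
    and c: "\<bar>c\<bar> \<le> \<bar>c'\<bar>"
  shows "(\<integral>\<^sup>+x. \<phi> (c' - x) \<partial>unifD) \<le> (\<integral>\<^sup>+x. \<phi> (c - x) \<partial>unifD)"
proof -
  have even: "(\<integral>\<^sup>+x. \<phi> (e - x) \<partial>unifD) = (\<integral>\<^sup>+x. \<phi> (\<bar>e\<bar> - x) \<partial>unifD)" for e
  proof (cases "e \<ge> 0")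
    case False
    have "(\<integral>\<^sup>+x. \<phi> (e - x) \<partial>unifD) = (\<integral>\<^sup>+x. \<phi> (e + x) \<partial>unifD)"
      using nn_integral_unifD_reflect[of "\<lambda>x. \<phi> (e + x)"] by simp
    also have "\<dots> = (\<integral>\<^sup>+x. \<phi> (\<bar>e\<bar> - x) \<partial>unifD)"
    proof (rule nn_integral_cong)
      fix x
      have "\<bar>e + x\<bar> = \<bar>\<bar>e\<bar> - x\<bar>"
        using False by auto
      then show "\<phi> (e + x) = \<phi> (\<bar>e\<bar> - x)"
        using \<phi> by (metis order.refl antisym)
    qed
    finally show ?thesis .
  qed simp
  have "(\<integral>\<^sup>+x. \<phi> (\<bar>c'\<bar> - x) * indicator {-1..1} x \<partial>lborel)
      \<le> (\<integral>\<^sup>+x. \<phi> (\<bar>c\<bar> - x) * indicator {-1..1} x \<partial>lborel)"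
    using c by (intro nn_integral_Icc_translate_antimono \<phi>) auto
  then show ?thesis
    unfolding even[of c] even[of c'] by (simp add: nn_integral_unifD divide_right_mono_ennreal)
qed

lemma prob_space_convolution:
  assumes "prob_space N" "prob_space N'" "sets N = sets borel" "sets N' = sets borel"
  shows "prob_space (N \<star> N')"
proof -
  interpret pair_prob_space N N'
    using assms(1,2) by (simp add: pair_prob_space_def pair_sigma_finite_def prob_space_imp_sigma_finite)
  have "(\<lambda>(x, y). x + y :: real) \<in> borel_measurable (borel \<Otimes>\<^sub>M borel)"
    by measurable
  then show ?thesis
    unfolding convolution_def using sets_pair_measure_cong[OF assms(3,4)]
    by (intro prob_space_distr) (simp cong: measurable_cong_sets)
qed

lemma borel_measurable_emeasure_translate:
  fixes N :: "real measure"
  assumes "finite_measure N" and [measurable_cong]: "sets N = sets borel"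
    and [measurable]: "S \<in> sets borel" "g \<in> borel_measurable M"
  shows "(\<lambda>x. emeasure N {w. w + g x \<in> S}) \<in> borel_measurable M"
proof -
  interpret finite_measure N by fact
  have "(\<lambda>p. snd p + g (fst p)) -` S \<inter> space (M \<Otimes>\<^sub>M N) \<in> sets (M \<Otimes>\<^sub>M N)"
    by measurable
  from measurable_emeasure_Pair[OF this] show ?thesis
    using sets_eq_imp_space_eq[OF assms(2)] by (simp add: space_pair_measure)
qed

lemma emeasure_convolution_unifD:
  assumes "finite_measure N" "sets N = sets borel" "S \<in> sets borel"
  shows "emeasure (N \<star> unifD) S = (\<integral>\<^sup>+x. emeasure N {w. w + x \<in> S} \<partial>unifD)"
proof -
  have fin_U: "finite_measure unifD"
    using prob_space_unifD by (rule prob_space.finite_measure)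
  have "(N \<star> unifD) = (unifD \<star> N)"
    using assms(1,2) fin_U by (intro convolution_commutative) auto
  then show ?thesis
    using assms fin_U sets_eq_imp_space_eq[OF assms(2)] by (simp add: convolution_emeasure)
qed

lemma emeasure_convolution_unifD_singleton:
  assumes "finite_measure N" "sets N = sets borel"
  shows "emeasure (N \<star> unifD) {a} = 0"
proof -
  have "emeasure (N \<star> unifD) {a} = (\<integral>\<^sup>+x. emeasure unifD {b. b + x \<in> {a}} \<partial>N)"
    using assms prob_space.finite_measure[OF prob_space_unifD] sets_eq_imp_space_eq[OF assms(2)]
    by (intro convolution_emeasure) auto
  also have "\<dots> = (\<integral>\<^sup>+x. emeasure unifD {a - x} \<partial>N)"
    by (intro nn_integral_cong arg_cong[where f="emeasure unifD"]) auto
  finally show ?thesis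
    by simp
qed

section \<open>Symmetric unimodal distributions\<close>

definition symmetric_unimodal :: "real measure \<Rightarrow> bool" where
  "symmetric_unimodal N \<longleftrightarrow> prob_space N \<and> sets N = sets borel \<and>
     (\<forall>y. emeasure N {y..} = emeasure N {..-y}) \<and>
     (\<forall>c c' h. \<bar>c\<bar> \<le> \<bar>c'\<bar> \<longrightarrow> emeasure N {c'-h..c'+h} \<le> emeasure N {c-h..c+h})"

lemma symmetric_unimodalD:
  assumes "symmetric_unimodal N"
  shows "prob_space N" "sets N = sets borel" "emeasure N {y..} = emeasure N {..-y}"
    and "\<bar>c\<bar> \<le> \<bar>c'\<bar> \<Longrightarrow> emeasure N {c'-h..c'+h} \<le> emeasure N {c-h..c+h}"
  using assms unfolding symmetric_unimodal_def by auto

lemma symmetric_unimodal_convolution_unifD: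
  assumes "symmetric_unimodal N"
  shows "symmetric_unimodal (N \<star> unifD)"
proof -
  note N = symmetric_unimodalD[OF assms]
  have fin_N: "finite_measure N"
    using N(1) by (rule prob_space.finite_measure)
  note conv = emeasure_convolution_unifD[OF fin_N N(2)]
  note translate_measurable = borel_measurable_emeasure_translate[OF fin_N N(2)]
  have "emeasure (N \<star> unifD) {y..} = emeasure (N \<star> unifD) {..-y}" for y
  proof -
    have "emeasure (N \<star> unifD) {y..} = (\<integral>\<^sup>+x. emeasure N {w. w + x \<in> {y..}} \<partial>unifD)"
      by (rule conv) simp
    also have "\<dots> = (\<integral>\<^sup>+x. emeasure N {w. w + (- x) \<in> {..-y}} \<partial>unifD)"
    proof (rule nn_integral_cong)
      fix x
      have "{w. w + x \<in> {y..}} = {y - x..}"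
        by auto
      then have "emeasure N {w. w + x \<in> {y..}} = emeasure N {.. - (y - x)}"
        by (simp only: N(3))
      then show "emeasure N {w. w + x \<in> {y..}} = emeasure N {w. w + (- x) \<in> {..-y}}"
        by (auto intro: arg_cong[where f="emeasure N"])
    qed
    also have "\<dots> = emeasure (N \<star> unifD) {..-y}"
      using nn_integral_unifD_reflect[OF translate_measurable[of "{..-y}" id]] by (simp add: conv)
    finally show ?thesis .
  qed
  moreover have "emeasure (N \<star> unifD) {c'-h..c'+h} \<le> emeasure (N \<star> unifD) {c-h..c+h}"
    if "\<bar>c\<bar> \<le> \<bar>c'\<bar>" for c c' h
  proof -
    define \<phi> where "\<phi> t = emeasure N {t-h..t+h}" for t
    have "\<phi> = (\<lambda>t. emeasure N {w. w + (- t) \<in> {-h..h}})"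
      unfolding \<phi>_def by (intro ext arg_cong[where f="emeasure N"]) auto
    then have \<phi>_measurable: "\<phi> \<in> borel_measurable borel"
      using translate_measurable[of "{-h..h}" uminus] by simp
    have window_conv: "emeasure (N \<star> unifD) {e-h..e+h} = (\<integral>\<^sup>+x. \<phi> (e - x) \<partial>unifD)" for e
      unfolding \<phi>_def by (simp add: conv, intro nn_integral_cong arg_cong[where f="emeasure N"]) auto
    show ?thesis
      unfolding window_conv using that
      by (intro nn_integral_unifD_translate_antimono \<phi>_measurable) (auto simp: \<phi>_def N(4))
  qed
  ultimately show ?thesis
    unfolding symmetric_unimodal_def
    using prob_space_convolution[OF N(1) prob_space_unifD N(2) sets_unifD] by auto
qed

section \<open>The distributions D_m\<close>

lemma symmetric_unimodal_return_0: "symmetric_unimodal (return borel 0)"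
  unfolding symmetric_unimodal_def
  by (auto simp: prob_space_return indicator_def)

lemma sets_unifD_sum [measurable_cong, simp]: "sets (unifD_sum m) = sets borel"
  unfolding unifD_sum_def by simp

lemma prob_space_unifD_sum: "prob_space (unifD_sum m)"
proof -
  interpret product_prob_space "\<lambda>_::nat. unifD"
    by (rule product_prob_space_unifD)
  show ?thesis
    unfolding unifD_sum_def by (intro prob_space.prob_space_distr prob_space_PiM) (simp_all add: prob_space_unifD)
qed

lemma unifD_sum_0: "unifD_sum 0 = return borel 0"
proof (rule measure_eqI)
  fix A :: "real set"
  assume "A \<in> sets (unifD_sum 0)"
  then show "emeasure (unifD_sum 0) A = emeasure (return borel 0) A"
    by (cases "0 \<in> A") (simp_all add: unifD_sum_def emeasure_distr PiM_empty)
qed simp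

lemma unifD_sum_Suc: "unifD_sum (Suc k) = (unifD_sum k \<star> unifD)"
proof (rule measure_eqI)
  interpret product_prob_space "\<lambda>_::nat. unifD"
    by (rule product_prob_space_unifD)
  fix A :: "real set"
  assume "A \<in> sets (unifD_sum (Suc k))"
  then have [measurable]: "A \<in> sets borel"
    by simp
  have "emeasure (unifD_sum (Suc k)) A
      = (\<integral>\<^sup>+\<omega>. indicator A (\<Sum>i<Suc k. \<omega> i) \<partial>PiM (insert k {..<k}) (\<lambda>_. unifD))"
    by (simp add: unifD_sum_def nn_integral_distr lessThan_Suc flip: nn_integral_indicator)
  also have "\<dots> = (\<integral>\<^sup>+\<omega>. (\<integral>\<^sup>+y. indicator A (\<Sum>i<Suc k. fun_upd \<omega> k y i) \<partial>unifD)
                      \<partial>PiM {..<k} (\<lambda>_. unifD))"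
    by (rule product_nn_integral_insert) auto
  also have "\<dots> = (\<integral>\<^sup>+\<omega>. (\<integral>\<^sup>+y. indicator A ((\<Sum>i<k. \<omega> i) + y) \<partial>unifD) \<partial>PiM {..<k} (\<lambda>_. unifD))"
  proof (intro nn_integral_cong)
    fix \<omega> :: "nat \<Rightarrow> real" and y
    have "(\<Sum>i<k. fun_upd \<omega> k y i) = (\<Sum>i<k. \<omega> i)"
      by (rule sum.cong) auto
    then show "indicator A (\<Sum>i<Suc k. fun_upd \<omega> k y i) = (indicator A ((\<Sum>i<k. \<omega> i) + y) :: ennreal)"
      by (simp add: sum.lessThan_Suc)
  qed
  also have "\<dots> = (\<integral>\<^sup>+x. (\<integral>\<^sup>+y. indicator A (x + y) \<partial>unifD) \<partial>unifD_sum k)"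
    unfolding unifD_sum_def by (simp add: nn_integral_distr)
  also have "\<dots> = emeasure (unifD_sum k \<star> unifD) A"
    using prob_space_unifD_sum prob_space_unifD
    by (simp add: convolution_emeasure' prob_space.finite_measure)
  finally show "emeasure (unifD_sum (Suc k)) A = emeasure (unifD_sum k \<star> unifD) A" .
qed simp

lemma symmetric_unimodal_unifD_sum: "symmetric_unimodal (unifD_sum m)"
  by (induction m)
    (simp_all add: unifD_sum_0 unifD_sum_Suc symmetric_unimodal_return_0
      symmetric_unimodal_convolution_unifD)

lemma emeasure_unifD_sum_singleton:
  assumes "1 \<le> m"
  shows "emeasure (unifD_sum m) {a} = 0"
proof -
  obtain k where "m = Suc k"
    using assms by (cases m) auto
  then show ?thesis
    using emeasure_convolution_unifD_singleton prob_space.finite_measure[OF prob_space_unifD_sum]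
    by (simp add: unifD_sum_Suc)
qed

section \<open>Tails\<close>

lemma borel_measurable_emeasure_atLeast:
  fixes N :: "real measure"
  assumes "finite_measure N" "sets N = sets borel"
  shows "(\<lambda>t. emeasure N {t..}) \<in> borel_measurable borel"
proof -
  have "(\<lambda>t. emeasure N {t..}) = (\<lambda>t. emeasure N {w. w + (- t) \<in> {0..}})"
    by (intro ext arg_cong[where f="emeasure N"]) auto
  then show ?thesis
    using borel_measurable_emeasure_translate[OF assms, of "{0..}" uminus] by simp
qed

lemma emeasure_atLeast_eq_greaterThan:
  fixes N :: "real measure"
  assumes "sets N = sets borel" "emeasure N {a} = 0"
  shows "emeasure N {a..} = emeasure N {a<..}"
proof -
  have "emeasure N {a} + emeasure N {a<..} = emeasure N ({a} \<union> {a<..})"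
    using assms(1) by (intro plus_emeasure) auto
  also have "{a} \<union> {a<..} = {a..}"
    by auto
  finally show ?thesis
    using assms(2) by simp
qed

lemma symmetric_unimodal_tail_midpoint:
  assumes "symmetric_unimodal N" and atomless: "\<And>a. emeasure N {a} = 0" and "0 \<le> y"
  shows "2 * emeasure N {y..} \<le> emeasure N {y - x..} + emeasure N {y + x..}"
proof -
  note N = symmetric_unimodalD[OF assms(1)]
  have split: "emeasure N {a..} = emeasure N {a..b} + emeasure N {b..}" if "a \<le> b" for a b
  proof -
    have "emeasure N {a..b} + emeasure N {b<..} = emeasure N ({a..b} \<union> {b<..})"
      using N(2) by (intro plus_emeasure) auto
    also have "{a..b} \<union> {b<..} = {a..}"
      using that by auto
    finally show ?thesis
      using emeasure_atLeast_eq_greaterThan[OF N(2) atomless] by simp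
  qed
  have nonneg_case: "2 * emeasure N {y..} \<le> emeasure N {y - x..} + emeasure N {y + x..}"
    if "0 \<le> x" for x
  proof -
    have "emeasure N {(y + x/2) - x/2..(y + x/2) + x/2}
        \<le> emeasure N {(y - x/2) - x/2..(y - x/2) + x/2}"
      using \<open>0 \<le> y\<close> that by (intro N(4)) auto
    then have window: "emeasure N {y..y + x} \<le> emeasure N {y - x..y}"
      by (simp add: add.commute)
    have right: "emeasure N {y..} = emeasure N {y..y + x} + emeasure N {y + x..}"
      using that by (intro split) simp
    have left: "emeasure N {y - x..} = emeasure N {y - x..y} + emeasure N {y..}"
      using that by (intro split) simp
    have "2 * emeasure N {y..} = emeasure N {y..} + (emeasure N {y..y + x} + emeasure N {y + x..})"
      unfolding mult_2 by (subst (2) right) (rule refl)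
    also have "\<dots> \<le> emeasure N {y..} + (emeasure N {y - x..y} + emeasure N {y + x..})"
      using window by (intro add_left_mono add_right_mono)
    also have "\<dots> = emeasure N {y - x..} + emeasure N {y + x..}"
      unfolding left by (simp only: ac_simps)
    finally show ?thesis .
  qed
  show ?thesis
    using nonneg_case[of x] nonneg_case[of "- x"] by (cases "0 \<le> x") (simp_all add: add.commute)
qed

lemma symmetric_unimodal_tail_le_convolution_unifD:
  assumes "symmetric_unimodal N" and atomless: "\<And>a. emeasure N {a} = 0" and "0 \<le> y"
  shows "emeasure N {y..} \<le> emeasure (N \<star> unifD) {y..}"
proof -
  note N = symmetric_unimodalD[OF assms(1)]
  have fin_N: "finite_measure N"
    using N(1) by (rule prob_space.finite_measure)
  define T where "T t = emeasure N {t..}" for t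
  have [measurable]: "T \<in> borel_measurable borel"
    unfolding T_def using fin_N N(2) by (rule borel_measurable_emeasure_atLeast)
  have conv: "emeasure (N \<star> unifD) {y..} = (\<integral>\<^sup>+x. T (y - x) \<partial>unifD)"
    unfolding T_def
    by (simp add: emeasure_convolution_unifD[OF fin_N N(2)],
        intro nn_integral_cong arg_cong[where f="emeasure N"]) auto
  have reflect: "(\<integral>\<^sup>+x. T (y - x) \<partial>unifD) = (\<integral>\<^sup>+x. T (y + x) \<partial>unifD)"
    using nn_integral_unifD_reflect[of "\<lambda>x. T (y + x)"] by simp
  have "2 * T y = (\<integral>\<^sup>+x. 2 * T y \<partial>unifD)"
    using prob_space.emeasure_space_1[OF prob_space_unifD] by simp
  also have "\<dots> \<le> (\<integral>\<^sup>+x. T (y - x) + T (y + x) \<partial>unifD)"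
    unfolding T_def
    by (intro nn_integral_mono symmetric_unimodal_tail_midpoint[OF assms(1) atomless \<open>0 \<le> y\<close>])
  also have "\<dots> = (\<integral>\<^sup>+x. T (y - x) \<partial>unifD) + (\<integral>\<^sup>+x. T (y + x) \<partial>unifD)"
    by (rule nn_integral_add) auto
  also have "\<dots> = 2 * emeasure (N \<star> unifD) {y..}"
    by (simp only: conv reflect mult_2)
  finally show ?thesis
    unfolding T_def using ennreal_mult_le_mult_iff[of 2] by simp
qed

lemma symmetric_unimodal_measure_tail_add_reflected:
  assumes "symmetric_unimodal N" and atomless: "\<And>a. emeasure N {a} = 0"
  shows "measure N {y..} + measure N {-y..} = 1"
proof -
  note N = symmetric_unimodalD[OF assms(1)]
  interpret prob_space N
    by (rule N(1))
  have "measure N {y..} = measure N {y<..}" "measure N {-y..} = measure N {..y}"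
    using emeasure_atLeast_eq_greaterThan[OF N(2) atomless] N(3)[of "-y"]
    by (simp_all add: measure_def)
  moreover have "measure N {y<..} + measure N {..y} = measure N ({y<..} \<union> {..y})"
    using N(2) by (intro finite_measure_Union[symmetric]) auto
  moreover have "{y<..} \<union> {..y} = space N"
    using sets_eq_imp_space_eq[OF N(2)] by auto
  ultimately show ?thesis
    by (simp add: prob_space)
qed

section \<open>Integration against the density of \<open>Y\<close>\<close>

lemma nn_integral_lborel_mono_even_part:
  fixes g h :: "real \<Rightarrow> ennreal"
  assumes "g \<in> borel_measurable borel" "h \<in> borel_measurable borel"
    and "\<And>y. g y + g (- y) \<le> h y + h (- y)"
  shows "(\<integral>\<^sup>+y. g y \<partial>lborel) \<le> (\<integral>\<^sup>+y. h y \<partial>lborel)"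
proof -
  have double: "2 * (\<integral>\<^sup>+y. f y \<partial>lborel) = (\<integral>\<^sup>+y. f y + f (- y) \<partial>lborel)"
    if [measurable]: "f \<in> borel_measurable borel" for f :: "real \<Rightarrow> ennreal"
    by (simp add: nn_integral_add nn_integral_lborel_reflect mult_2)
  have "2 * (\<integral>\<^sup>+y. g y \<partial>lborel) \<le> 2 * (\<integral>\<^sup>+y. h y \<partial>lborel)"
    unfolding double[OF assms(1)] double[OF assms(2)] by (intro nn_integral_mono assms(3))
  then show ?thesis
    using ennreal_mult_le_mult_iff[of 2] by simp
qed

lemma nn_integral_density_mult_tail_mono:
  fixes f :: "real \<Rightarrow> real" and N N' :: "real measure"
  assumes "prob_space N" "sets N = sets borel" "prob_space N'" "sets N' = sets borel"
    and tails: "\<And>y. measure N {y..} + measure N {-y..} = 1"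
    and tails': "\<And>y. measure N' {y..} + measure N' {-y..} = 1"
    and le: "\<And>y. 0 \<le> y \<Longrightarrow> emeasure N {y..} \<le> emeasure N' {y..}"
    and [measurable]: "(\<lambda>y. ennreal (f y)) \<in> borel_measurable borel"
    and f_nonneg: "\<And>y. 0 \<le> f y" and f_dominant: "\<And>y. 0 \<le> y \<Longrightarrow> f (- y) \<le> f y"
  shows "(\<integral>\<^sup>+y. f y * emeasure N {y..} \<partial>lborel) \<le> (\<integral>\<^sup>+y. f y * emeasure N' {y..} \<partial>lborel)"
proof -
  interpret N: prob_space N by fact
  interpret N': prob_space N' by fact
  define T T' where "T y = measure N {y..}" and "T' y = measure N' {y..}" for y
  have [measurable]: "(\<lambda>y. emeasure N {y..}) \<in> borel_measurable borel"
    "(\<lambda>y. emeasure N' {y..}) \<in> borel_measurable borel"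
    using borel_measurable_emeasure_atLeast N.finite_measure_axioms N'.finite_measure_axioms assms(2,4)
    by auto
  have pair: "f y * T y + f (- y) * T (- y) \<le> f y * T' y + f (- y) * T' (- y)" if "0 \<le> y" for y
  proof -
    have "0 \<le> (f y - f (- y)) * (T' y - T y)"
      using f_dominant[OF that] le[OF that]
      by (simp add: T_def T'_def N.emeasure_eq_measure N'.emeasure_eq_measure)
    moreover have reflected: "T (- y) = 1 - T y" "T' (- y) = 1 - T' y"
      using tails[of y] tails'[of y] unfolding T_def T'_def by linarith+
    ultimately show ?thesis
      unfolding reflected by (simp add: algebra_simps)
  qed
  have "f y * T y + f (- y) * T (- y) \<le> f y * T' y + f (- y) * T' (- y)" for y
    using pair[of y] pair[of "- y"] by (cases "0 \<le> y") (simp_all add: add.commute)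
  moreover have "ennreal (f y) * emeasure N {y..} = ennreal (f y * T y)"
    "ennreal (f y) * emeasure N' {y..} = ennreal (f y * T' y)" for y
    using f_nonneg by (simp_all add: T_def T'_def N.emeasure_eq_measure N'.emeasure_eq_measure ennreal_mult)
  ultimately have "ennreal (f y) * emeasure N {y..} + ennreal (f (- y)) * emeasure N {- y..}
      \<le> ennreal (f y) * emeasure N' {y..} + ennreal (f (- y)) * emeasure N' {- y..}" for y
    using f_nonneg unfolding T_def T'_def by (simp flip: ennreal_plus)
  then show ?thesis
    by (rule nn_integral_lborel_mono_even_part[rotated 2]) measurable
qed

lemma nn_integral_density_mult_tail_unifD_sum_mono:
  fixes f :: "real \<Rightarrow> real"
  assumes "1 \<le> m" and "(\<lambda>y. ennreal (f y)) \<in> borel_measurable borel"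
    and "\<And>y. 0 \<le> f y" and "\<And>y. 0 \<le> y \<Longrightarrow> f (- y) \<le> f y"
  shows "(\<integral>\<^sup>+y. f y * emeasure (unifD_sum m) {y..} \<partial>lborel)
    \<le> (\<integral>\<^sup>+y. f y * emeasure (unifD_sum m \<star> unifD) {y..} \<partial>lborel)"
proof -
  have N: "symmetric_unimodal (unifD_sum m)" and N': "symmetric_unimodal (unifD_sum m \<star> unifD)"
    by (simp_all add: symmetric_unimodal_unifD_sum symmetric_unimodal_convolution_unifD)
  have atomless: "emeasure (unifD_sum m) {a} = 0"
    and atomless': "emeasure (unifD_sum m \<star> unifD) {a} = 0" for a
    using emeasure_unifD_sum_singleton[OF assms(1)]
    by (simp_all add: emeasure_convolution_unifD_singleton prob_space_unifD_sum prob_space.finite_measure)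
  show ?thesis
    using N N' assms(2-4)
    by (intro nn_integral_density_mult_tail_mono
        symmetric_unimodal_measure_tail_add_reflected[OF N atomless]
        symmetric_unimodal_measure_tail_add_reflected[OF N' atomless']
        symmetric_unimodal_tail_le_convolution_unifD[OF N atomless])
      (simp_all add: symmetric_unimodal_def)
qed

lemma (in prob_space) indep_var_of_disjoint_blocks:
  assumes "indep_vars (\<lambda>_. borel) F I" "J \<inter> K = {}" "J \<subseteq> I" "K \<subseteq> I"
    and "g \<in> borel_measurable (PiM J (\<lambda>_. borel))" "h \<in> borel_measurable (PiM K (\<lambda>_. borel))"
  shows "indep_var borel (\<lambda>\<omega>. g (\<lambda>i\<in>J. F i \<omega>)) borel (\<lambda>\<omega>. h (\<lambda>i\<in>K. F i \<omega>))"
  using indep_var_compose[OF indep_var_restrict[OF assms(1-4)] assms(5,6)] by (simp add: comp_def)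

lemma (in prob_space) emeasure_le_indep_density:
  fixes A Y :: "'a \<Rightarrow> real"
  assumes indep: "indep_var borel A borel Y" and Y: "distributed M lborel Y f"
  shows "emeasure M {\<omega> \<in> space M. Y \<omega> \<le> A \<omega>}
    = (\<integral>\<^sup>+y. f y * emeasure (distr M borel A) {y..} \<partial>lborel)"
proof -
  have [measurable]: "A \<in> borel_measurable M" "Y \<in> borel_measurable M"
    using indep by (auto dest: indep_var_rv1 indep_var_rv2)
  let ?NA = "distr M borel A" and ?NY = "distr M borel Y"
  interpret NA: prob_space ?NA
    by (rule prob_space_distr) simp
  interpret NY: prob_space ?NY
    by (rule prob_space_distr) simp
  interpret pair_sigma_finite ?NA ?NY ..
  define D where "D = {p :: real \<times> real. snd p \<le> fst p}"
  have "D = {p \<in> space (borel \<Otimes>\<^sub>M borel). snd p \<le> fst p}"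
    by (simp add: D_def space_pair_measure)
  also have "\<dots> \<in> sets (borel \<Otimes>\<^sub>M borel)"
    by measurable
  finally have D: "D \<in> sets (?NA \<Otimes>\<^sub>M ?NY)"
    by (simp add: sets_pair_measure_cong[of ?NA borel ?NY borel])
  have [measurable]: "f \<in> borel_measurable borel"
    using distributed_borel_measurable[OF Y] by simp
  have "?NY = density lborel f"
    using distributed_distr_eq_density[OF Y] by (simp cong: distr_cong)
  moreover have "(\<lambda>y. emeasure ?NA {y..}) \<in> borel_measurable borel"
    by (rule borel_measurable_emeasure_atLeast) (simp_all add: NA.finite_measure_axioms)
  moreover have "{\<omega> \<in> space M. Y \<omega> \<le> A \<omega>} = (\<lambda>\<omega>. (A \<omega>, Y \<omega>)) -` D \<inter> space M"
    unfolding D_def by auto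
  ultimately have "emeasure M {\<omega> \<in> space M. Y \<omega> \<le> A \<omega>} = emeasure (?NA \<Otimes>\<^sub>M ?NY) D"
    using indep D by (simp add: indep_var_distribution_eq emeasure_distr)
  also have "\<dots> = (\<integral>\<^sup>+y. emeasure ?NA ((\<lambda>x. (x, y)) -` D) \<partial>?NY)"
    using D by (rule emeasure_pair_measure_alt2)
  also have "\<dots> = (\<integral>\<^sup>+y. f y * emeasure ?NA {y..} \<partial>lborel)"
    unfolding D_def using \<open>?NY = density lborel f\<close>
    by (simp add: nn_integral_density atLeast_def)
  finally show ?thesis .
qed

theorem lemma24:
  fixes M :: "'a measure" and Z1 X Y :: "'a \<Rightarrow> real" and fY :: "real \<Rightarrow> real" and m :: nat
  assumes "prob_space M"
    and "m \<ge> 1"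
    and "Z1 \<in> borel_measurable M" and "distr M lborel Z1 = unifD_sum m"
    and "X \<in> borel_measurable M" and "distr M lborel X = unifD"
    and "\<And>y. fY y \<ge> 0"
    and "distributed M lborel Y (\<lambda>y. ennreal (fY y))"
    and "\<And>y. y \<ge> 0 \<Longrightarrow> fY y \<ge> fY (- y)"
    and "prob_space.indep_vars M (\<lambda>_. borel)
           (\<lambda>i::nat. if i = 0 then Z1 else if i = 1 then X else Y) {0, 1, 2}"
  shows "measure M {\<omega> \<in> space M. Z1 \<omega> \<ge> Y \<omega>}
           \<le> measure M {\<omega> \<in> space M. Z1 \<omega> + X \<omega> \<ge> Y \<omega>}"
proof -
  interpret prob_space M
    by fact
  note blocks = indep_var_of_disjoint_blocks[OF assms(10)]
  have Z1_X: "indep_var borel Z1 borel X"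
    using blocks[of "{0}" "{1}" "\<lambda>f. f 0" "\<lambda>f. f 1"] by simp
  have Z1_Y: "indep_var borel Z1 borel Y"
    using blocks[of "{0}" "{2}" "\<lambda>f. f 0" "\<lambda>f. f 2"] by simp
  have Z1_plus_X_Y: "indep_var borel (\<lambda>\<omega>. Z1 \<omega> + X \<omega>) borel Y"
    using blocks[of "{0, 1}" "{2}" "\<lambda>f. f 0 + f 1" "\<lambda>f. f 2"] by simp
  have distr_Z1: "distr M borel Z1 = unifD_sum m"
    and distr_Z1_plus_X: "distr M borel (\<lambda>\<omega>. Z1 \<omega> + X \<omega>) = (unifD_sum m \<star> unifD)"
    using assms(3-6) Z1_X by (simp_all add: sum_indep_random_variable cong: distr_cong)
  have "emeasure M {\<omega> \<in> space M. Y \<omega> \<le> Z1 \<omega>} \<le> emeasure M {\<omega> \<in> space M. Y \<omega> \<le> Z1 \<omega> + X \<omega>}"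
    unfolding emeasure_le_indep_density[OF Z1_Y assms(8)]
      emeasure_le_indep_density[OF Z1_plus_X_Y assms(8)] distr_Z1 distr_Z1_plus_X
    using assms(2,7,9) distributed_borel_measurable[OF assms(8)]
    by (intro nn_integral_density_mult_tail_unifD_sum_mono) simp_all
  then show ?thesis
    by (simp add: emeasure_eq_measure)
qed

end
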